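(* Let $\mathbb{D}$ be a division ring, let $m,n\ge 1$ be integers, and let $P$ be an $n\times m$ matrix over $\mathbb{D}$. If $V$ is an invertible $m\times m$ matrix over $\mathbb{D}$ and $W$ is an invertible $n\times n$ matrix over $\mathbb{D}$, then the rings $\mathfrak{M}(\mathbb{D}, m, n, P)$ and $\mathfrak{M}(\mathbb{D}, m, n, VPW)$ are isomorphic. Moreover, if $\mathbb{D}$ is a field, then $\mathfrak{M}(\mathbb{D}, m, n, P)$ and $\mathfrak{M}(\mathbb{D}, m, n, VPW)$ are isomorphic as $\mathbb{D}$-algebras.
   Context: For a division ring $\mathbb{D}$ and an $n\times m$ matrix $P$ over $\mathbb{D}$, $\mathfrak{M}(\mathbb{D}, m, n, P)$ denotes the set of all $m\times n$ matrices over $\mathbb{D}$ with entrywise addition and multiplication $A\bullet B = APB$ (usual matrix products on the right). When $\mathbb{D}$ is a field, scalar multiplication is entrywise, making it a $\mathbb{D}$-algebra. *)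

theory Defs
  imports "HOL-Analysis.Analysis"
begin

text \<open>The ring M(D,m,n,P): m x n matrices (type 'a^'n^'m) with entrywise addition
  and multiplication A \<bullet> B = A P B, where P is an n x m matrix (type 'a^'m^'n).\<close>
definition sandwich_mult :: "'a::semiring_1^'m^'n \<Rightarrow> 'a^'n^'m \<Rightarrow> 'a^'n^'m \<Rightarrow> 'a^'n^'m" where
  "sandwich_mult P A B = A ** P ** B"

definition mat_scale :: "'a::times \<Rightarrow> 'a^'n^'m \<Rightarrow> 'a^'n^'m" where
  "mat_scale c A = (\<chi> i j. c * A $ i $ j)"

definition sandwich_ring_iso ::
  "'a::semiring_1^'m^'n \<Rightarrow> 'a^'m^'n \<Rightarrow> ('a^'n^'m \<Rightarrow> 'a^'n^'m) \<Rightarrow> bool" where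
  "sandwich_ring_iso P Q f \<longleftrightarrow> bij f \<and> (\<forall>A B. f (A + B) = f A + f B)
     \<and> (\<forall>A B. f (sandwich_mult P A B) = sandwich_mult Q (f A) (f B))"

definition sandwich_alg_iso ::
  "'a::semiring_1^'m^'n \<Rightarrow> 'a^'m^'n \<Rightarrow> ('a^'n^'m \<Rightarrow> 'a^'n^'m) \<Rightarrow> bool" where
  "sandwich_alg_iso P Q f \<longleftrightarrow> sandwich_ring_iso P Q f
     \<and> (\<forall>c A. f (mat_scale c A) = mat_scale c (f A))"

end

theory Submission
  imports Defs
begin

text \<open>Conjugation \<open>A \<mapsto> W\<inverse> A V\<inverse>\<close> is the isomorphism: it is additive and bijective with
  inverse \<open>B \<mapsto> W B V\<close>, and \<open>(W\<inverse> A V\<inverse>) (V P W) (W\<inverse> B V\<inverse>) = W\<inverse> (A P B) V\<inverse>\<close>.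
  It commutes with entrywise scaling as soon as scalars are central.\<close>

lemma matrix_mul_matrix_inv:
  fixes A :: "'a::semiring_1^'n^'m"
  assumes "invertible A"
  shows "A ** matrix_inv A = mat 1" and "matrix_inv A ** A = mat 1"
  using someI_ex[OF assms[unfolded invertible_def]] unfolding matrix_inv_def by auto

lemma matrix_add_rdistrib:
  fixes A B :: "'a::semiring_1^'n^'m" and C :: "'a^'p^'n"
  shows "(A + B) ** C = A ** C + B ** C"
  by (vector matrix_matrix_mult_def sum.distrib[symmetric] distrib_right)

lemma matrix_mul_mat_scale_left:
  fixes A :: "'a::semiring_1^'n^'m" and C :: "'a^'p^'n"
  shows "mat_scale c A ** C = mat_scale c (A ** C)"
  by (vector matrix_matrix_mult_def mat_scale_def sum_distrib_left mult.assoc)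

lemma matrix_mul_mat_scale_right:
  fixes C :: "'a::semiring_1^'n^'m" and A :: "'a^'p^'n"
  assumes central: "\<And>x. c * x = x * c"
  shows "C ** mat_scale c A = mat_scale c (C ** A)"
proof -
  have "x * (c * y) = c * (x * y)" for x y :: 'a
    by (metis central mult.assoc)
  then show ?thesis
    by (vector matrix_matrix_mult_def mat_scale_def sum_distrib_left)
qed

lemma sandwich_mult_conj:
  fixes P :: "'a::semiring_1^'m^'n" and V V' :: "'a^'n^'n" and W W' :: "'a^'m^'m"
  assumes "V' ** V = mat 1" and "W ** W' = mat 1"
  shows "W' ** sandwich_mult P A B ** V'
    = sandwich_mult (V ** P ** W) (W' ** A ** V') (W' ** B ** V')"
proof -
  have "W' ** A ** V' ** (V ** P ** W) ** (W' ** B ** V')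
      = W' ** A ** (V' ** V) ** P ** (W ** W') ** B ** V'"
    by (simp add: matrix_mul_assoc)
  also have "\<dots> = W' ** (A ** P ** B) ** V'"
    by (simp add: assms matrix_mul_assoc)
  finally show ?thesis
    by (simp add: sandwich_mult_def)
qed

lemma sandwich_ring_iso_conj:
  fixes P :: "'a::semiring_1^'m^'n" and V :: "'a^'n^'n" and W :: "'a^'m^'m"
  assumes V: "invertible V" and W: "invertible W"
  shows "sandwich_ring_iso P (V ** P ** W) (\<lambda>A. matrix_inv W ** A ** matrix_inv V)"
proof -
  note inv = matrix_mul_matrix_inv[OF V] matrix_mul_matrix_inv[OF W]
  have "bij (\<lambda>A. matrix_inv W ** A ** matrix_inv V)"
  proof (rule bij_betw_byWitness[where f' = "\<lambda>B. W ** B ** V"])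
    show "\<forall>A\<in>UNIV. W ** (matrix_inv W ** A ** matrix_inv V) ** V = A"
      by (metis inv matrix_mul_assoc matrix_mul_lid matrix_mul_rid)
    show "\<forall>B\<in>UNIV. matrix_inv W ** (W ** B ** V) ** matrix_inv V = B"
      by (metis inv matrix_mul_assoc matrix_mul_lid matrix_mul_rid)
  qed auto
  then show ?thesis
    unfolding sandwich_ring_iso_def
    by (simp add: matrix_add_ldistrib matrix_add_rdistrib sandwich_mult_conj inv)
qed

lemma sandwich_alg_iso_conj:
  fixes P :: "'a::semiring_1^'m^'n" and V :: "'a^'n^'n" and W :: "'a^'m^'m"
  assumes "invertible V" and "invertible W" and "\<forall>x y :: 'a. x * y = y * x"
  shows "sandwich_alg_iso P (V ** P ** W) (\<lambda>A. matrix_inv W ** A ** matrix_inv V)"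
  using assms sandwich_ring_iso_conj
  by (simp add: sandwich_alg_iso_def matrix_mul_mat_scale_left matrix_mul_mat_scale_right)

theorem lemma1p4:
  fixes P :: "'a::division_ring^'m^'n"
    and V :: "'a^'n^'n"
    and W :: "'a^'m^'m"
  assumes "invertible V" and "invertible W"
  shows "(\<exists>f. sandwich_ring_iso P (V ** P ** W) f)
    \<and> ((\<forall>x y :: 'a. x * y = y * x) \<longrightarrow> (\<exists>f. sandwich_alg_iso P (V ** P ** W) f))"
  using sandwich_ring_iso_conj[OF assms] sandwich_alg_iso_conj[OF assms] by blast

end
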